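(* Let $\mathcal{X}\subseteq\mathbb{R}^d$ and let $\mathcal{M}$ be a mechanism on weighted data sets admitting a weighted distinguishability profile $\epsilon\colon[1,\infty)\times\mathcal{X}\to\mathbb{R}_{\ge0}$ that is differentiable in $w$, with $\epsilon'(w,\mathbf{x})=\partial\epsilon(w,\mathbf{x})/\partial w$. Let $\widetilde{\mathcal{M}}(\{\mathbf{x}_i\}_{i=1}^n)=\mathcal{M}(\{(1,\mathbf{x}_i)\}_{i=1}^n)$ be its unweighted counterpart and $\tilde\epsilon(\mathbf{x})=\epsilon(1,\mathbf{x})$. Then there is a Poisson importance sampler $S$ such that the following holds, where $\psi$ denotes the distinguishability profile of $\mathcal{M}\circ S$ given by $\psi(\mathbf{x})=\log\big(1+q(\mathbf{x})(e^{\epsilon(1/q(\mathbf{x}),\mathbf{x})}-1)\big)$ with $q$ the selection-probability function of $S$: for any $\mathbf{x}\in\mathcal{X}$, if $\epsilon'(1,\mathbf{x})<1-e^{-\epsilon(1,\mathbf{x})}$, then $\psi(\mathbf{x})<\tilde\epsilon(\mathbf{x})$.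
   Context: A weighted data set is a finite set $\{(w_i,\mathbf{x}_i)\}$ with $w_i\ge1$, $\mathbf{x}_i\in\mathcal{X}$. Distributions $P,Q$ are $\epsilon$-indistinguishable if $P(Y)\le e^\epsilon Q(Y)$ and $Q(Y)\le e^\epsilon P(Y)$ for all measurable $Y$. A weighted distinguishability profile of $\mathcal{M}$ is a function $\epsilon\colon[1,\infty)\times\mathcal{X}\to\mathbb{R}_{\ge0}$ such that for every weighted data set $\mathcal{S}$ and every $(w',\mathbf{x}')$, $\mathcal{M}(\mathcal{S})$ and $\mathcal{M}(\mathcal{S}\cup\{(w',\mathbf{x}')\})$ are $\epsilon(w',\mathbf{x}')$-indistinguishable. A Poisson importance sampler for a function $q\colon\mathcal{X}\to(0,1]$ maps $\mathcal{D}=\{\mathbf{x}_1,\dots,\mathbf{x}_n\}$ to $\{(1/q(\mathbf{x}_i),\mathbf{x}_i)\mid\gamma_i=1\}$ with $\gamma_i$ independent Bernoulli$(q(\mathbf{x}_i))$. A distinguishability profile $\psi$ of an unweighted mechanism $\mathcal{A}$ means $\mathcal{A}(\mathcal{D})$ and $\mathcal{A}(\mathcal{D}\cup\{\mathbf{x}\})$ are $\psi(\mathbf{x})$-indistinguishable for all data sets $\mathcal{D}$ and points $\mathbf{x}$; it is known that the stated $\psi$ is such a profile of $\mathcal{M}\circ S$. *)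

theory Defs
  imports "HOL-Probability.Probability"
begin

definition weighted_dataset :: "'x set \<Rightarrow> (real \<times> 'x) set \<Rightarrow> bool" where
  "weighted_dataset X S \<longleftrightarrow> finite S \<and> (\<forall>(w, x) \<in> S. 1 \<le> w \<and> x \<in> X)"

definition indist :: "real \<Rightarrow> 'y measure \<Rightarrow> 'y measure \<Rightarrow> bool" where
  "indist e P Q \<longleftrightarrow> sets P = sets Q \<and>
     (\<forall>Y \<in> sets P. measure P Y \<le> exp e * measure Q Y \<and> measure Q Y \<le> exp e * measure P Y)"

definition weighted_profile ::
    "'x set \<Rightarrow> ((real \<times> 'x) set \<Rightarrow> 'y measure) \<Rightarrow> (real \<Rightarrow> 'x \<Rightarrow> real) \<Rightarrow> bool" where
  "weighted_profile X M eps \<longleftrightarrow>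
     (\<forall>S w' x'. weighted_dataset X S \<and> 1 \<le> w' \<and> x' \<in> X \<longrightarrow>
        indist (eps w' x') (M S) (M (S \<union> {(w', x')})))"

end

theory Submission
  imports Defs
begin

text \<open>
  Writing \<open>q = 1 / w\<close>, the claim at a point \<open>x\<close> is \<open>gap w > 0\<close> for
  \<open>gap w = w (exp (\<epsilon> 1 x) - 1) - (exp (\<epsilon> w x) - 1)\<close>. Since \<open>gap 1 = 0\<close> and the
  slope hypothesis is exactly \<open>gap' 1 > 0\<close>, subsampling with a weight slightly
  above 1 already beats the unweighted profile.
\<close>

lemma ln_one_plus_scaled_less_iff:
  fixes q y a :: real
  assumes "0 < q" "q \<le> 1"
  shows "ln (1 + q * (exp y - 1)) < a \<longleftrightarrow> 1 + q * (exp y - 1) < exp a"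
proof -
  have "- 1 < q * (exp y - 1)"
    using assms mult_strict_left_mono[of "- 1" "exp y - 1" q] by simp
  then show ?thesis
    by (metis add.commute diff_gt_0_iff_gt diff_minus_eq_add exp_gt_zero ln_exp
        ln_less_cancel_iff)
qed

lemma subsampling_beats_unweighted_profile:
  fixes e :: "real \<Rightarrow> real"
  assumes der: "(e has_real_derivative d) (at 1 within {1..})"
    and slope: "d < 1 - exp (- e 1)"
  shows "\<exists>q. 0 < q \<and> q < 1 \<and> ln (1 + q * (exp (e (1 / q)) - 1)) < e 1"
proof -
  define gap where "gap w = w * (exp (e 1) - 1) - (exp (e w) - 1)" for w
  have gap_deriv: "(gap has_real_derivative exp (e 1) - 1 - exp (e 1) * d) (at 1 within {1..})"
    unfolding gap_def by (auto intro!: derivative_eq_intros der)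
  have "exp (e 1) * d < exp (e 1) - 1"
    using mult_strict_left_mono[OF slope exp_gt_zero[of "e 1"]]
    by (simp add: algebra_simps exp_minus)
  then obtain r where "r > 0"
    and increasing: "\<forall>t>0. 1 + t \<in> {1..} \<longrightarrow> t < r \<longrightarrow> gap 1 < gap (1 + t)"
    using has_real_derivative_pos_inc_right[OF gap_deriv] by auto
  define w where "w = 1 + r / 2"
  have "w > 1"
    using \<open>r > 0\<close> by (simp add: w_def)
  have "gap 1 = 0"
    by (simp add: gap_def)
  then have "0 < gap w"
    using increasing \<open>r > 0\<close> by (simp add: w_def)
  then have "1 + (1 / w) * (exp (e w) - 1) < exp (e 1)"
    using \<open>w > 1\<close> by (simp add: gap_def field_simps)
  then have "ln (1 + (1 / w) * (exp (e w) - 1)) < e 1"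
    using \<open>w > 1\<close> ln_one_plus_scaled_less_iff[of "1 / w"] by simp
  then show ?thesis
    using \<open>w > 1\<close> by (intro exI[of _ "1 / w"]) simp
qed

theorem proposition2:
  fixes X :: "(real ^ 'd) set"
    and M :: "(real \<times> (real ^ 'd)) set \<Rightarrow> 'y measure"
    and eps eps' :: "real \<Rightarrow> real ^ 'd \<Rightarrow> real"
  assumes mech: "\<And>S. weighted_dataset X S \<Longrightarrow> prob_space (M S)"
    and profile: "weighted_profile X M eps"
    and nonneg: "\<And>w x. 1 \<le> w \<Longrightarrow> x \<in> X \<Longrightarrow> 0 \<le> eps w x"
    and deriv: "\<And>w x. 1 \<le> w \<Longrightarrow> x \<in> X \<Longrightarrow>
                  ((\<lambda>v. eps v x) has_real_derivative eps' w x) (at w within {1..})"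
  shows "\<exists>q :: real ^ 'd \<Rightarrow> real.
           (\<forall>x \<in> X. 0 < q x \<and> q x \<le> 1) \<and>
           (\<forall>x \<in> X. eps' 1 x < 1 - exp (- eps 1 x) \<longrightarrow>
              ln (1 + q x * (exp (eps (1 / q x) x) - 1)) < eps 1 x)"
proof -
  \<comment> \<open>Only the differentiability of the profile in the weight matters; the remaining
      hypotheses are what makes \<open>\<psi>\<close> a profile of \<open>M \<circ> S\<close>, which is not restated here.\<close>
  have "\<exists>q. 0 < q \<and> q \<le> 1 \<and> (x \<in> X \<and> eps' 1 x < 1 - exp (- eps 1 x) \<longrightarrow>
            ln (1 + q * (exp (eps (1 / q) x) - 1)) < eps 1 x)" for x
  proof (cases "x \<in> X \<and> eps' 1 x < 1 - exp (- eps 1 x)")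
    case True
    then show ?thesis
      using subsampling_beats_unweighted_profile[OF deriv[OF order_refl]] by fastforce
  next
    case False
    then show ?thesis by (intro exI[of _ 1]) simp
  qed
  then obtain q where "\<And>x. 0 < q x \<and> q x \<le> 1 \<and>
      (x \<in> X \<and> eps' 1 x < 1 - exp (- eps 1 x) \<longrightarrow>
        ln (1 + q x * (exp (eps (1 / q x) x) - 1)) < eps 1 x)"
    by metis
  then show ?thesis by blast
qed

end
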